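(* Let $G$ be a torsion-free metrizable abelian topological group in which every cyclic subgroup is discrete. The following are equivalent: (i) $G$ is not NSS; (ii) $G$ contains a subgroup topologically isomorphic to $\mathbb{Z}^{(\mathbb{N})}$. If $G$ is also complete, then the following is equivalent to (i) and (ii): (iii) $G$ contains a subgroup topologically isomorphic to $\mathbb{Z}^{\mathbb{N}}$.
   Context: $\mathbb{Z}^{\mathbb{N}}$ carries the Tychonoff product topology with $\mathbb{Z}$ discrete, and $\mathbb{Z}^{(\mathbb{N})}$ is its subgroup of finitely supported sequences with the subspace topology. A topological group is NSS if it has a neighbourhood of the identity containing no non-trivial subgroup. *)

theory Defs
  imports "HOL-Analysis.Analysis"
begin

definition ab_topgroup :: "('a::ab_group_add) topology \<Rightarrow> bool" where
  "ab_topgroup T \<longleftrightarrow> topspace T = UNIV \<and>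
     continuous_map (prod_topology T T) T (\<lambda>(x, y). x + y) \<and>
     continuous_map T T uminus"

definition is_subgroup :: "('a::ab_group_add) set \<Rightarrow> bool" where
  "is_subgroup H \<longleftrightarrow> 0 \<in> H \<and> (\<forall>x\<in>H. \<forall>y\<in>H. x + y \<in> H) \<and> (\<forall>x\<in>H. - x \<in> H)"

definition gmult :: "nat \<Rightarrow> ('a::ab_group_add) \<Rightarrow> 'a" where
  "gmult n x = (((+) x) ^^ n) 0"

definition torsion_free :: "('a::ab_group_add) itself \<Rightarrow> bool" where
  "torsion_free _ \<longleftrightarrow> (\<forall>(x::'a) n. n > 0 \<and> gmult n x = 0 \<longrightarrow> x = 0)"

definition cyclic_subgroup :: "('a::ab_group_add) \<Rightarrow> 'a set" where
  "cyclic_subgroup x = {y. \<exists>n. y = gmult n x \<or> y = - gmult n x}"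

definition NSS :: "('a::ab_group_add) topology \<Rightarrow> bool" where
  "NSS T \<longleftrightarrow> (\<exists>U. (\<exists>V. openin T V \<and> 0 \<in> V \<and> V \<subseteq> U) \<and>
        (\<forall>H. is_subgroup H \<and> H \<subseteq> U \<longrightarrow> H = {0}))"

text \<open>Completeness of a (metrizable) abelian topological group with respect to its
  group uniformity, expressed with sequences: every group-Cauchy sequence converges.\<close>
definition group_complete :: "('a::ab_group_add) topology \<Rightarrow> bool" where
  "group_complete T \<longleftrightarrow> (\<forall>s::nat \<Rightarrow> 'a.
     (\<forall>U. openin T U \<and> 0 \<in> U \<longrightarrow> (\<exists>N. \<forall>m\<ge>N. \<forall>n\<ge>N. s m - s n \<in> U))
     \<longrightarrow> (\<exists>x. limitin T s x sequentially))"

definition ZN_top :: "(nat \<Rightarrow> int) topology" where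
  "ZN_top = product_topology (\<lambda>_. discrete_topology (UNIV :: int set)) UNIV"

definition ZN_fin :: "(nat \<Rightarrow> int) set" where
  "ZN_fin = {f. finite {n. f n \<noteq> 0}}"

definition contains_top_iso :: "('a::ab_group_add) topology \<Rightarrow> (nat \<Rightarrow> int) set \<Rightarrow> bool" where
  "contains_top_iso T S \<longleftrightarrow> (\<exists>H (\<phi>::(nat \<Rightarrow> int) \<Rightarrow> 'a).
     is_subgroup H \<and> H \<subseteq> topspace T \<and> \<phi> ` S = H \<and> inj_on \<phi> S \<and>
     (\<forall>f\<in>S. \<forall>g\<in>S. \<phi> (\<lambda>i. f i + g i) = \<phi> f + \<phi> g) \<and>
     homeomorphic_map (subtopology ZN_top S) (subtopology T H) \<phi>)"

end

theory Submission
  imports Defs "HOL-Library.Function_Algebras"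
begin

text \<open>
  If \<open>G\<close> is not NSS, every neighbourhood of \<open>0\<close> contains a nonzero cyclic subgroup.
  Choose inductively such elements \<open>x n\<close> together with symmetric neighbourhoods \<open>W n\<close>
  of \<open>0\<close> shrinking to \<open>0\<close>, such that \<open>W (n+1) + W (n+1) \<subseteq> W n\<close>, the cyclic
  subgroup of \<open>x n\<close> lies in \<open>W n\<close>, and the subgroup \<open>A n\<close> generated by
  \<open>x 0, \<dots>, x (n-1)\<close> meets \<open>W n + W n + W n + W n\<close> only in \<open>0\<close>; discreteness of the
  cyclic subgroup of \<open>x n\<close> is what lets the next neighbourhood keep \<open>A (n+1)\<close> away.
  Then \<open>c \<mapsto> \<Sum>n. c n \<cdot> x n\<close> is defined on every subgroup of \<open>\<int>\<^sup>\<nat>\<close> on which these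
  series converge: on the finitely supported sequences always, and on all of \<open>\<int>\<^sup>\<nat>\<close> when
  \<open>G\<close> is complete, because the partial sums are Cauchy. It is a topological isomorphism
  onto its image, since a sum lying in \<open>W N\<close> forces \<open>c 0 = \<dots> = c (N-1) = 0\<close>
  (torsion-freeness makes the \<open>x n\<close> independent), while \<open>c 0 = \<dots> = c (N+1) = 0\<close>
  forces the sum into \<open>W N\<close>. Conversely, a subgroup of \<open>\<int>\<^sup>\<nat>\<close> containing the unit
  vectors is not NSS: its subgroups of sequences vanishing below \<open>N\<close> are nontrivial and form
  a neighbourhood base of \<open>0\<close>.
\<close>

section \<open>Integer multiples and subgroups\<close>

lemma gmult_0 [simp]: "gmult 0 x = 0"
  by (simp add: gmult_def)

lemma gmult_Suc: "gmult (Suc n) x = x + gmult n x"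
  by (simp add: gmult_def)

lemma gmult_add: "gmult (m + n) x = gmult m x + gmult n x"
  by (induction m) (auto simp: gmult_Suc add.assoc)

lemma gmult_zero [simp]: "gmult n 0 = 0"
  by (induction n) (simp_all add: gmult_Suc)

definition int_mult :: "int \<Rightarrow> 'a::ab_group_add \<Rightarrow> 'a" where
  "int_mult k x = gmult (nat k) x - gmult (nat (- k)) x"

lemma int_mult_nonneg: "0 \<le> k \<Longrightarrow> int_mult k x = gmult (nat k) x"
  by (simp add: int_mult_def)

lemma int_mult_nonpos: "k \<le> 0 \<Longrightarrow> int_mult k x = - gmult (nat (- k)) x"
  by (simp add: int_mult_def)

lemma int_mult_of_nat_diff: "int_mult (int p - int q) x = gmult p x - gmult q x"
proof -
  have "gmult (p + nat (int q - int p)) x = gmult (nat (int p - int q) + q) x"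
    by (rule arg_cong[where f = "\<lambda>n. gmult n x"]) linarith
  then show ?thesis
    by (simp add: int_mult_def gmult_add algebra_simps)
qed

lemma int_mult_add: "int_mult (k + l) x = int_mult k x + int_mult l x"
proof -
  have "k + l = int (nat k + nat l) - int (nat (- k) + nat (- l))"
    by simp
  then show ?thesis
    by (simp only: int_mult_of_nat_diff) (simp add: int_mult_def gmult_add algebra_simps)
qed

lemma int_mult_0 [simp]: "int_mult 0 x = 0"
  by (simp add: int_mult_def)

lemma int_mult_zero [simp]: "int_mult k 0 = 0"
  by (simp add: int_mult_def)

lemma int_mult_minus: "int_mult (- k) x = - int_mult k x"
  by (simp add: int_mult_def)

lemma torsion_freeD:
  fixes x :: "'a::ab_group_add"
  assumes "torsion_free TYPE('a)" "gmult n x = 0" "n > 0"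
  shows "x = 0"
  using assms by (auto simp: torsion_free_def)

lemma int_mult_eq_0_iff:
  fixes x :: "'a::ab_group_add"
  assumes "torsion_free TYPE('a)"
  shows "int_mult k x = 0 \<longleftrightarrow> k = 0 \<or> x = 0"
proof
  assume kx: "int_mult k x = 0"
  have gx: "gmult (nat \<bar>k\<bar>) x = 0"
  proof (cases "k \<ge> 0")
    case True
    then show ?thesis
      using kx by (simp add: int_mult_nonneg)
  next
    case False
    then show ?thesis
      using kx by (simp add: int_mult_nonpos)
  qed
  show "k = 0 \<or> x = 0"
  proof (rule disjCI)
    assume "x \<noteq> 0"
    then have "\<not> nat \<bar>k\<bar> > 0"
      using gx torsion_freeD[OF assms] by blast
    then show "k = 0"
      by simp
  qed
next
  assume "k = 0 \<or> x = 0"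
  then show "int_mult k x = 0"
    by auto
qed

lemma cyclic_subgroup_eq_range: "cyclic_subgroup x = range (\<lambda>k. int_mult k x)"
proof (intro equalityI subsetI)
  fix y assume "y \<in> cyclic_subgroup x"
  then obtain n where "y = gmult n x \<or> y = - gmult n x"
    by (auto simp: cyclic_subgroup_def)
  then have "y = int_mult (int n) x \<or> y = int_mult (- int n) x"
    by (metis int_mult_nonneg int_mult_nonpos nat_int minus_minus neg_0_le_iff_le of_nat_0_le_iff)
  then show "y \<in> range (\<lambda>k. int_mult k x)"
    by blast
next
  fix y assume "y \<in> range (\<lambda>k. int_mult k x)"
  then obtain k where "y = int_mult k x"
    by blast
  then have "y = gmult (nat k) x \<or> y = - gmult (nat (- k)) x"
    by (metis int_mult_nonneg int_mult_nonpos linear)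
  then show "y \<in> cyclic_subgroup x"
    by (auto simp: cyclic_subgroup_def)
qed

lemma int_mult_in_cyclic_subgroup: "int_mult k x \<in> cyclic_subgroup x"
  by (simp add: cyclic_subgroup_eq_range)

lemma zero_in_cyclic_subgroup: "0 \<in> cyclic_subgroup x"
  using int_mult_in_cyclic_subgroup[of 0 x] by simp

lemma is_subgroupI:
  assumes "0 \<in> H" "\<And>x y. x \<in> H \<Longrightarrow> y \<in> H \<Longrightarrow> x + y \<in> H" "\<And>x. x \<in> H \<Longrightarrow> - x \<in> H"
  shows "is_subgroup H"
  using assms by (simp add: is_subgroup_def)

lemma is_subgroup_cyclic_subgroup: "is_subgroup (cyclic_subgroup x)"
  unfolding cyclic_subgroup_eq_range
proof (rule is_subgroupI)
  show "0 \<in> range (\<lambda>k. int_mult k x)"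
    by (metis int_mult_0 rangeI)
next
  fix y z assume "y \<in> range (\<lambda>k. int_mult k x)" "z \<in> range (\<lambda>k. int_mult k x)"
  then obtain k l where "y = int_mult k x" "z = int_mult l x"
    by blast
  then show "y + z \<in> range (\<lambda>k. int_mult k x)"
    by (metis int_mult_add rangeI)
next
  fix y assume "y \<in> range (\<lambda>k. int_mult k x)"
  then obtain k where "y = int_mult k x"
    by blast
  then show "- y \<in> range (\<lambda>k. int_mult k x)"
    by (metis int_mult_minus rangeI)
qed

lemma cyclic_subgroup_subset:
  assumes "is_subgroup H" "x \<in> H"
  shows "cyclic_subgroup x \<subseteq> H"
proof -
  have "gmult n x \<in> H" for n
    using assms by (induction n) (auto simp: is_subgroup_def gmult_Suc)
  then show ?thesis
    using assms(1) by (auto simp: cyclic_subgroup_def is_subgroup_def)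
qed

lemma is_subgroup_set_plus:
  assumes "is_subgroup A" "is_subgroup B"
  shows "is_subgroup (A + B)"
proof (rule is_subgroupI)
  show "0 \<in> A + B"
    using assms set_plus_intro[of 0 A 0 B] by (simp add: is_subgroup_def)
next
  fix x y assume "x \<in> A + B" "y \<in> A + B"
  then obtain a b a' b' where "x = a + b" "y = a' + b'" "a \<in> A" "b \<in> B" "a' \<in> A" "b' \<in> B"
    by (auto elim!: set_plus_elim)
  moreover have "(a + a') + (b + b') \<in> A + B"
    using assms \<open>a \<in> A\<close> \<open>b \<in> B\<close> \<open>a' \<in> A\<close> \<open>b' \<in> B\<close>
    by (intro set_plus_intro) (auto simp: is_subgroup_def)
  ultimately show "x + y \<in> A + B"
    by (simp add: algebra_simps)
next
  fix x assume "x \<in> A + B"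
  then obtain a b where "x = a + b" "a \<in> A" "b \<in> B"
    by (auto elim!: set_plus_elim)
  moreover have "- a + - b \<in> A + B"
    using assms \<open>a \<in> A\<close> \<open>b \<in> B\<close> by (intro set_plus_intro) (auto simp: is_subgroup_def)
  ultimately show "- x \<in> A + B"
    by (simp add: add.commute)
qed

lemma is_subgroup_diff: "is_subgroup S \<Longrightarrow> f \<in> S \<Longrightarrow> g \<in> S \<Longrightarrow> f - g \<in> S"
  unfolding is_subgroup_def by (metis diff_conv_add_uminus)

definition additive_on :: "'a::ab_group_add set \<Rightarrow> ('a \<Rightarrow> 'b::ab_group_add) \<Rightarrow> bool" where
  "additive_on S \<phi> \<longleftrightarrow> (\<forall>f\<in>S. \<forall>g\<in>S. \<phi> (f + g) = \<phi> f + \<phi> g)"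

lemma additive_on_subset: "additive_on S \<phi> \<Longrightarrow> S' \<subseteq> S \<Longrightarrow> additive_on S' \<phi>"
  unfolding additive_on_def by (meson subsetD)

lemma additive_on_zero:
  assumes "is_subgroup S" "additive_on S \<phi>"
  shows "\<phi> 0 = 0"
proof -
  have "\<phi> (0 + 0) = \<phi> 0 + \<phi> 0"
    using assms unfolding additive_on_def is_subgroup_def by blast
  then show ?thesis
    by simp
qed

lemma additive_on_uminus:
  assumes "is_subgroup S" "additive_on S \<phi>" "f \<in> S"
  shows "\<phi> (- f) = - \<phi> f"
proof -
  have "\<phi> (f + - f) = \<phi> f + \<phi> (- f)"
    using assms unfolding additive_on_def is_subgroup_def by blast
  then show ?thesis
    using additive_on_zero[OF assms(1,2)] by (simp add: eq_neg_iff_add_eq_0 add.commute)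
qed

lemma additive_on_diff:
  assumes "is_subgroup S" "additive_on S \<phi>" "f \<in> S" "g \<in> S"
  shows "\<phi> (f - g) = \<phi> f - \<phi> g"
proof -
  have "\<phi> (f + - g) = \<phi> f + \<phi> (- g)"
    using assms unfolding additive_on_def is_subgroup_def by blast
  then show ?thesis
    using additive_on_uminus[OF assms(1,2,4)] by simp
qed

lemma is_subgroup_image:
  assumes "is_subgroup S" "additive_on S \<phi>"
  shows "is_subgroup (\<phi> ` S)"
proof (rule is_subgroupI)
  show "0 \<in> \<phi> ` S"
    using assms additive_on_zero[OF assms] by (metis image_eqI is_subgroup_def)
next
  fix y z assume "y \<in> \<phi> ` S" "z \<in> \<phi> ` S"
  then obtain f g where "f \<in> S" "g \<in> S" "y = \<phi> f" "z = \<phi> g"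
    by blast
  then show "y + z \<in> \<phi> ` S"
    using assms unfolding additive_on_def is_subgroup_def by (metis image_eqI)
next
  fix y assume "y \<in> \<phi> ` S"
  then obtain f where "f \<in> S" "y = \<phi> f"
    by blast
  then show "- y \<in> \<phi> ` S"
    using assms additive_on_uminus[OF assms] unfolding is_subgroup_def by (metis image_eqI)
qed

section \<open>Abelian topological groups\<close>

locale abelian_topgroup =
  fixes T :: "'a::ab_group_add topology"
  assumes ab_topgroup: "ab_topgroup T"
begin

lemma topspace_eq [simp]: "topspace T = UNIV"
  using ab_topgroup by (simp add: ab_topgroup_def)

lemma continuous_map_plus: "continuous_map (prod_topology T T) T (\<lambda>(x, y). x + y)"
  using ab_topgroup by (simp add: ab_topgroup_def)

lemma continuous_map_add:
  assumes "continuous_map X T f" "continuous_map X T g"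
  shows "continuous_map X T (\<lambda>z. f z + g z)"
proof -
  have "continuous_map X (prod_topology T T) (\<lambda>z. (f z, g z))"
    using assms by (rule continuous_map_pairedI)
  from continuous_map_compose[OF this continuous_map_plus] show ?thesis
    by (simp add: o_def)
qed

lemma continuous_map_uminus:
  assumes "continuous_map X T f"
  shows "continuous_map X T (\<lambda>z. - f z)"
proof -
  have "continuous_map T T uminus"
    using ab_topgroup by (simp add: ab_topgroup_def)
  then show ?thesis
    using continuous_map_compose[OF assms] by (simp add: o_def)
qed

lemma openin_translation_preimage:
  assumes "openin T U"
  shows "openin T {z. a + z \<in> U}"
proof -
  have cont: "continuous_map T T (\<lambda>z. a + z)"
    by (intro continuous_map_add) (auto simp: continuous_map_id[unfolded id_def])
  show ?thesis
    using openin_continuous_map_preimage[OF cont assms] by simp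
qed

lemma openin_uminus_preimage:
  assumes "openin T U"
  shows "openin T {z. - z \<in> U}"
proof -
  have cont: "continuous_map T T (\<lambda>z. - z)"
    by (intro continuous_map_uminus) (simp add: continuous_map_id[unfolded id_def])
  show ?thesis
    using openin_continuous_map_preimage[OF cont assms] by simp
qed

lemma limitin_add:
  assumes "limitin T f y F" "limitin T g z F"
  shows "limitin T (\<lambda>m. f m + g m) (y + z) F"
proof -
  have lim: "limitin (prod_topology T T) (\<lambda>m. (f m, g m)) (y, z) F"
    using assms by (simp add: limitin_pairwise o_def)
  show ?thesis
    using continuous_map_limit[OF continuous_map_plus lim] by (simp add: o_def)
qed

lemma limitin_diff:
  assumes "limitin T f y F" "limitin T g z F"
  shows "limitin T (\<lambda>m. f m - g m) (y - z) F"
proof -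
  have "limitin T (\<lambda>m. - g m) (- z) F"
    using continuous_map_limit[OF continuous_map_uminus[OF continuous_map_id] assms(2)]
    by (simp add: o_def)
  then have "limitin T (\<lambda>m. f m + - g m) (y + - z) F"
    by (rule limitin_add[OF assms(1)])
  then show ?thesis
    by simp
qed

definition symmetric_zero_nbhd :: "'a set \<Rightarrow> bool" where
  "symmetric_zero_nbhd V \<longleftrightarrow> openin T V \<and> 0 \<in> V \<and> (\<forall>v\<in>V. - v \<in> V)"

lemma zero_nbhd_half:
  assumes "openin T U" "0 \<in> U"
  obtains V where "symmetric_zero_nbhd V" "V + V \<subseteq> U"
proof -
  have "openin (prod_topology T T) {p \<in> topspace (prod_topology T T). (\<lambda>(x, y). x + y) p \<in> U}"
    using openin_continuous_map_preimage[OF continuous_map_plus assms(1)] .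
  then have open_sum: "openin (prod_topology T T) {p. fst p + snd p \<in> U}"
    by (simp add: case_prod_beta)
  have "(0, 0) \<in> {p. fst p + snd p \<in> U}"
    using assms(2) by simp
  then have "\<exists>V1 V2. openin T V1 \<and> openin T V2 \<and> 0 \<in> V1 \<and> 0 \<in> V2 \<and>
      V1 \<times> V2 \<subseteq> {p. fst p + snd p \<in> U}"
    by (rule open_sum[unfolded openin_prod_topology_alt, rule_format])
  then obtain V1 V2 where V: "openin T V1" "openin T V2" "0 \<in> V1" "0 \<in> V2"
    "V1 \<times> V2 \<subseteq> {p. fst p + snd p \<in> U}"
    by blast
  define V where "V = (V1 \<inter> V2) \<inter> {z. - z \<in> V1 \<inter> V2}"
  have "openin T V"
    unfolding V_def using V(1,2) by (intro openin_Int openin_uminus_preimage)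
  moreover have "0 \<in> V" "\<forall>v\<in>V. - v \<in> V"
    using V(3,4) unfolding V_def by auto
  ultimately have "symmetric_zero_nbhd V"
    by (simp add: symmetric_zero_nbhd_def)
  moreover have "V + V \<subseteq> U"
  proof
    fix w assume "w \<in> V + V"
    then obtain u v where "w = u + v" "u \<in> V" "v \<in> V"
      by (rule set_plus_elim)
    then have "(u, v) \<in> V1 \<times> V2" and "w = u + v"
      unfolding V_def by auto
    then show "w \<in> U"
      using V(5) by auto
  qed
  ultimately show ?thesis
    by (rule that)
qed

lemma zero_nbhd_quarter:
  assumes "openin T U" "0 \<in> U"
  obtains V where "symmetric_zero_nbhd V" "V + V + V + V \<subseteq> U"
proof -
  obtain V' where V': "symmetric_zero_nbhd V'" "V' + V' \<subseteq> U"
    using zero_nbhd_half[OF assms] .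
  have "openin T V'" "0 \<in> V'"
    using V'(1) by (auto simp: symmetric_zero_nbhd_def)
  then obtain V where V: "symmetric_zero_nbhd V" "V + V \<subseteq> V'"
    by (rule zero_nbhd_half)
  have "V + V + V + V = (V + V) + (V + V)"
    by (simp only: add.assoc)
  also have "\<dots> \<subseteq> V' + V'"
    using V(2) V(2) by (rule set_plus_mono2)
  also have "\<dots> \<subseteq> U"
    by (rule V'(2))
  finally show ?thesis
    by (rule that[OF V(1)])
qed

end

section \<open>Cylinders and subgroups of the product of countably many copies of \<int>\<close>

lemma topspace_ZN_top [simp]: "topspace ZN_top = UNIV"
  by (simp add: ZN_top_def)

definition cylinder :: "(nat \<Rightarrow> int) \<Rightarrow> nat \<Rightarrow> (nat \<Rightarrow> int) set" where
  "cylinder f N = {g. \<forall>i<N. g i = f i}"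

lemma openin_ZN_top_iff: "openin ZN_top U \<longleftrightarrow> (\<forall>f\<in>U. \<exists>N. cylinder f N \<subseteq> U)"
  unfolding ZN_top_def openin_product_topology_alt topspace_discrete_topology
proof (intro ball_cong refl iffI)
  fix f
  assume "\<exists>V. finite {i \<in> UNIV. V i \<noteq> UNIV} \<and> (\<forall>i\<in>UNIV. openin (discrete_topology UNIV) (V i))
            \<and> f \<in> Pi\<^sub>E UNIV V \<and> Pi\<^sub>E UNIV V \<subseteq> U"
  then obtain V where V: "finite {i. V i \<noteq> UNIV}" "f \<in> Pi\<^sub>E UNIV V" "Pi\<^sub>E UNIV V \<subseteq> U"
    by auto
  obtain N where N: "{i. V i \<noteq> UNIV} \<subseteq> {..<N}"
    using finite_nat_bounded[OF V(1)] by blast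
  have "cylinder f N \<subseteq> Pi\<^sub>E UNIV V"
  proof
    fix g assume g: "g \<in> cylinder f N"
    have "g i \<in> V i" for i
    proof (cases "i < N")
      case True
      then show ?thesis
        using g V(2) by (auto simp: cylinder_def)
    next
      case False
      then show ?thesis
        using N by auto
    qed
    then show "g \<in> Pi\<^sub>E UNIV V"
      by auto
  qed
  then show "\<exists>N. cylinder f N \<subseteq> U"
    using V(3) by blast
next
  fix f
  assume "\<exists>N. cylinder f N \<subseteq> U"
  then obtain N where N: "cylinder f N \<subseteq> U"
    by blast
  define V where "V i = (if i < N then {f i} else UNIV)" for i
  have "finite {i. V i \<noteq> UNIV}"
    by (rule finite_subset[of _ "{..<N}"]) (auto simp: V_def)
  moreover have "Pi\<^sub>E UNIV V = cylinder f N"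
    by (fastforce simp: PiE_UNIV_domain Pi_iff V_def cylinder_def split: if_splits)
  ultimately show "\<exists>V. finite {i \<in> UNIV. V i \<noteq> UNIV} \<and> (\<forall>i\<in>UNIV. openin (discrete_topology UNIV) (V i))
            \<and> f \<in> Pi\<^sub>E UNIV V \<and> Pi\<^sub>E UNIV V \<subseteq> U"
    using N by (intro exI[of _ V]) (auto simp: cylinder_def)
qed

lemma self_in_cylinder: "f \<in> cylinder f N"
  by (simp add: cylinder_def)

lemma cylinder_eq: "g \<in> cylinder f N \<Longrightarrow> cylinder g N = cylinder f N"
  by (auto simp: cylinder_def)

lemma openin_cylinder: "openin ZN_top (cylinder f N)"
  unfolding openin_ZN_top_iff using cylinder_eq by blast

lemma openin_subtopology_ZN_top_iff:
  "openin (subtopology ZN_top S) U \<longleftrightarrow> U \<subseteq> S \<and> (\<forall>f\<in>U. \<exists>N. cylinder f N \<inter> S \<subseteq> U)"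
proof
  assume "openin (subtopology ZN_top S) U"
  then obtain V where "openin ZN_top V" "U = V \<inter> S"
    by (auto simp: openin_subtopology)
  then show "U \<subseteq> S \<and> (\<forall>f\<in>U. \<exists>N. cylinder f N \<inter> S \<subseteq> U)"
    unfolding openin_ZN_top_iff by blast
next
  assume U: "U \<subseteq> S \<and> (\<forall>f\<in>U. \<exists>N. cylinder f N \<inter> S \<subseteq> U)"
  then obtain N where N: "\<And>f. f \<in> U \<Longrightarrow> cylinder f (N f) \<inter> S \<subseteq> U"
    by metis
  have "openin ZN_top (\<Union>f\<in>U. cylinder f (N f))"
    by (intro openin_Union) (auto intro: openin_cylinder)
  moreover have "U \<subseteq> (\<Union>f\<in>U. cylinder f (N f)) \<inter> S"
    using U self_in_cylinder by blast
  moreover have "(\<Union>f\<in>U. cylinder f (N f)) \<inter> S \<subseteq> U"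
    using N by blast
  ultimately show "openin (subtopology ZN_top S) U"
    unfolding openin_subtopology by blast
qed

lemma contains_top_isoI:
  assumes "is_subgroup S" "inj_on \<phi> S" "additive_on S \<phi>"
    and "homeomorphic_map (subtopology ZN_top S) (subtopology T (\<phi> ` S)) \<phi>"
  shows "contains_top_iso T S"
proof -
  have "\<phi> ` S = \<phi> ` topspace (subtopology ZN_top S)"
    by simp
  also have "\<dots> = topspace (subtopology T (\<phi> ` S))"
    by (rule homeomorphic_imp_surjective_map[OF assms(4)])
  also have "\<dots> \<subseteq> topspace T"
    by simp
  finally have "\<phi> ` S \<subseteq> topspace T" .
  moreover have "\<forall>f\<in>S. \<forall>g\<in>S. \<phi> (\<lambda>i. f i + g i) = \<phi> f + \<phi> g"
    using assms(3) unfolding additive_on_def plus_fun_def .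
  ultimately show ?thesis
    unfolding contains_top_iso_def
    by (intro exI[of _ "\<phi> ` S"] exI[of _ \<phi>] conjI refl is_subgroup_image[OF assms(1,3)] assms(2,4))
qed

lemma contains_top_isoE:
  assumes "contains_top_iso T S"
  obtains \<phi> where "inj_on \<phi> S" "additive_on S \<phi>" "continuous_map (subtopology ZN_top S) T \<phi>"
proof -
  obtain H \<phi> where \<phi>: "inj_on \<phi> S" "\<forall>f\<in>S. \<forall>g\<in>S. \<phi> (\<lambda>i. f i + g i) = \<phi> f + \<phi> g"
    "homeomorphic_map (subtopology ZN_top S) (subtopology T H) \<phi>"
    using assms unfolding contains_top_iso_def by blast
  have "additive_on S \<phi>"
    using \<phi>(2) by (simp add: additive_on_def plus_fun_def)
  moreover have "continuous_map (subtopology ZN_top S) T \<phi>"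
    using homeomorphic_imp_continuous_map[OF \<phi>(3)] continuous_map_in_subtopology by blast
  ultimately show ?thesis
    using \<phi>(1) that by blast
qed

lemma is_subgroup_ZN_fin: "is_subgroup ZN_fin"
proof (rule is_subgroupI)
  fix f g assume "f \<in> ZN_fin" "g \<in> ZN_fin"
  moreover have "{n. (f + g) n \<noteq> 0} \<subseteq> {n. f n \<noteq> 0} \<union> {n. g n \<noteq> 0}"
    by auto
  ultimately show "f + g \<in> ZN_fin"
    unfolding ZN_fin_def by (auto intro: finite_subset)
qed (simp_all add: ZN_fin_def)

lemma unit_vector_in_ZN_fin: "(\<lambda>i. if i = N then 1 else 0) \<in> ZN_fin"
proof -
  have "{n. (if n = N then 1 else 0 :: int) \<noteq> 0} = {N}"
    by auto
  then show ?thesis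
    unfolding ZN_fin_def by simp
qed

lemma is_subgroup_vanishing_below:
  assumes "is_subgroup S"
  shows "is_subgroup (cylinder 0 N \<inter> S)"
  using assms unfolding is_subgroup_def cylinder_def by auto

lemma contains_top_iso_small_subgroup:
  assumes S: "is_subgroup S" and units: "\<And>N. (\<lambda>i. if i = N then 1 else 0) \<in> S"
    and "contains_top_iso T S" and V: "openin T V" "0 \<in> V"
  obtains K where "is_subgroup K" "K \<subseteq> V" "K \<noteq> {0}"
proof -
  obtain \<phi> where inj: "inj_on \<phi> S" and additive: "additive_on S \<phi>"
    and cont: "continuous_map (subtopology ZN_top S) T \<phi>"
    using contains_top_isoE[OF assms(3)] .
  have \<phi>0: "\<phi> 0 = 0" and "0 \<in> S"
    using additive_on_zero[OF S additive] S by (simp_all add: is_subgroup_def)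
  have "openin (subtopology ZN_top S) {f \<in> topspace (subtopology ZN_top S). \<phi> f \<in> V}"
    using cont V(1) by (rule openin_continuous_map_preimage)
  moreover have "0 \<in> {f \<in> topspace (subtopology ZN_top S). \<phi> f \<in> V}"
    using \<open>0 \<in> S\<close> \<phi>0 V(2) by simp
  ultimately obtain N where N: "cylinder 0 N \<inter> S \<subseteq> {f \<in> topspace (subtopology ZN_top S). \<phi> f \<in> V}"
    unfolding openin_subtopology_ZN_top_iff by blast
  define K where "K = \<phi> ` (cylinder 0 N \<inter> S)"
  have "is_subgroup K"
    unfolding K_def using is_subgroup_vanishing_below[OF S] additive_on_subset[OF additive]
    by (intro is_subgroup_image) auto
  moreover have "K \<subseteq> V"
    unfolding K_def using subsetD[OF N] by (intro image_subsetI) simp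
  moreover have "K \<noteq> {0}"
  proof
    assume K: "K = {0}"
    define e where "e = (\<lambda>i::nat. if i = N then (1::int) else 0)"
    have e: "e \<in> cylinder 0 N \<inter> S"
      using units[of N] by (simp add: e_def cylinder_def)
    then have "\<phi> e = \<phi> 0"
      using K \<phi>0 unfolding K_def by (metis imageI singletonD)
    then have "e = 0"
      using inj e \<open>0 \<in> S\<close> by (auto dest: inj_onD)
    then have "e N = 0"
      by simp
    then show False
      by (simp add: e_def)
  qed
  ultimately show ?thesis
    by (rule that)
qed

lemma contains_top_iso_imp_not_NSS:
  assumes "is_subgroup S" "\<And>N. (\<lambda>i. if i = N then 1 else 0) \<in> S" "contains_top_iso T S"
  shows "\<not> NSS T"
proof
  assume "NSS T"
  then obtain U V where V: "openin T V" "0 \<in> V" "V \<subseteq> U"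
    and small: "\<And>H. is_subgroup H \<Longrightarrow> H \<subseteq> U \<Longrightarrow> H = {0}"
    unfolding NSS_def by blast
  obtain K where "is_subgroup K" "K \<subseteq> V" "K \<noteq> {0}"
    using contains_top_iso_small_subgroup[OF assms V(1,2)] .
  then show False
    using small V(3) by (meson subset_trans)
qed

section \<open>Independent sequences in non-NSS groups\<close>

lemma not_NSS_imp_cyclic_subgroup_subset:
  assumes "\<not> NSS T" "openin T U" "0 \<in> U"
  obtains x where "x \<noteq> 0" "cyclic_subgroup x \<subseteq> U"
proof -
  have "\<not> (\<forall>H. is_subgroup H \<and> H \<subseteq> U \<longrightarrow> H = {0})"
    using assms unfolding NSS_def by blast
  then obtain H where H: "is_subgroup H" "H \<subseteq> U" "H \<noteq> {0}"
    by blast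
  then obtain x where "x \<in> H" "x \<noteq> 0"
    by (auto simp: is_subgroup_def)
  then show ?thesis
    using cyclic_subgroup_subset[OF H(1)] H(2) that by blast
qed

lemma discrete_cyclic_subgroup_isolated:
  assumes "subtopology T (cyclic_subgroup x) = discrete_topology (cyclic_subgroup x)"
  obtains D where "openin T D" "D \<inter> cyclic_subgroup x = {0}"
proof -
  have "openin (subtopology T (cyclic_subgroup x)) {0}"
    using assms zero_in_cyclic_subgroup by simp
  then show ?thesis
    using that unfolding openin_subtopology by blast
qed

lemma first_countable_nbhd_base_seq:
  assumes "first_countable X" "x \<in> topspace X"
  shows "\<exists>B :: nat \<Rightarrow> 'a set. (\<forall>n. openin X (B n) \<and> x \<in> B n) \<and>
           (\<forall>U. openin X U \<and> x \<in> U \<longrightarrow> (\<exists>n. B n \<subseteq> U))"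
proof -
  obtain \<B> where \<B>: "countable \<B>" "\<And>V. V \<in> \<B> \<Longrightarrow> openin X V"
    "\<And>U. openin X U \<Longrightarrow> x \<in> U \<Longrightarrow> \<exists>V\<in>\<B>. x \<in> V \<and> V \<subseteq> U"
    using assms unfolding first_countable_def by meson
  define \<B>\<^sub>x where "\<B>\<^sub>x = {V \<in> \<B>. x \<in> V}"
  have "\<B>\<^sub>x \<noteq> {}"
    using \<B>(3)[OF openin_topspace assms(2)] unfolding \<B>\<^sub>x_def by blast
  moreover have "countable \<B>\<^sub>x"
    using \<B>(1) unfolding \<B>\<^sub>x_def by simp
  ultimately have range: "range (from_nat_into \<B>\<^sub>x) = \<B>\<^sub>x"
    by (rule range_from_nat_into)
  have "from_nat_into \<B>\<^sub>x n \<in> \<B>\<^sub>x" for n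
    using range by blast
  then have "\<forall>n. openin X (from_nat_into \<B>\<^sub>x n) \<and> x \<in> from_nat_into \<B>\<^sub>x n"
    using \<B>(2) unfolding \<B>\<^sub>x_def by auto
  moreover have "\<exists>n. from_nat_into \<B>\<^sub>x n \<subseteq> U" if U: "openin X U" "x \<in> U" for U
  proof -
    obtain V where "V \<in> \<B>\<^sub>x" "V \<subseteq> U"
      using \<B>(3)[OF U] unfolding \<B>\<^sub>x_def by blast
    then show ?thesis
      using range by (metis rangeE)
  qed
  ultimately show ?thesis
    by (intro exI[of _ "from_nat_into \<B>\<^sub>x"]) blast
qed

lemma set_plus_self_subset_sum4:
  fixes V :: "'a::comm_monoid_add set"
  assumes "0 \<in> V"
  shows "V + V \<subseteq> V + V + V + V"
proof -
  have "0 \<in> V + V"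
    using set_plus_intro[OF assms assms] by simp
  then show ?thesis
    using set_zero_plus2[of "V + V" "V + V"] by (simp only: add.assoc)
qed

lemma set_plus_cyclic_subgroup_inter_trivial:
  assumes A: "A \<inter> (W + W + W + W) \<subseteq> {0}" and "0 \<in> W"
    and x: "cyclic_subgroup x \<subseteq> W" and D: "D \<inter> cyclic_subgroup x = {0}"
  shows "(A + cyclic_subgroup x) \<inter> (D \<inter> W) \<subseteq> {0}"
proof
  fix e assume e: "e \<in> (A + cyclic_subgroup x) \<inter> (D \<inter> W)"
  then obtain a c where ac: "e = a + c" "a \<in> A" "c \<in> cyclic_subgroup x"
    by (auto elim: set_plus_elim)
  have "- c \<in> W"
    using ac(3) x is_subgroup_cyclic_subgroup[of x] by (auto simp: is_subgroup_def)
  then have "e + - c + 0 + 0 \<in> W + W + W + W"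
    using e \<open>0 \<in> W\<close> by (intro set_plus_intro) auto
  then have "a = 0"
    using A ac by auto
  then have "e \<in> D \<inter> cyclic_subgroup x"
    using e ac by auto
  then show "e \<in> {0}"
    using D by blast
qed

lemma (in abelian_topgroup) independent_extension:
  assumes "\<not> NSS T"
    and discrete: "\<And>x. subtopology T (cyclic_subgroup x) = discrete_topology (cyclic_subgroup x)"
    and W: "symmetric_zero_nbhd W" and A: "A \<inter> (W + W + W + W) \<subseteq> {0}"
    and B: "openin T B" "0 \<in> B"
  obtains x W' where "x \<noteq> 0" "cyclic_subgroup x \<subseteq> W" "symmetric_zero_nbhd W'"
    "W' + W' \<subseteq> W" "W' \<subseteq> B" "(A + cyclic_subgroup x) \<inter> (W' + W' + W' + W') \<subseteq> {0}"
proof -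
  have W_open: "openin T W" and zero_W: "0 \<in> W"
    using W by (auto simp: symmetric_zero_nbhd_def)
  obtain x where x: "x \<noteq> 0" "cyclic_subgroup x \<subseteq> W"
    using not_NSS_imp_cyclic_subgroup_subset[OF assms(1) W_open zero_W] .
  obtain D where D: "openin T D" "D \<inter> cyclic_subgroup x = {0}"
    using discrete_cyclic_subgroup_isolated[OF discrete] .
  have "openin T (D \<inter> W \<inter> B)" "0 \<in> D \<inter> W \<inter> B"
    using D W_open zero_W B zero_in_cyclic_subgroup[of x] by auto
  then obtain V where V: "symmetric_zero_nbhd V" "V + V + V + V \<subseteq> D \<inter> W \<inter> B"
    by (rule zero_nbhd_quarter)
  have "0 \<in> V"
    using V(1) by (simp add: symmetric_zero_nbhd_def)
  then have "V \<subseteq> V + V" "V + V \<subseteq> V + V + V + V"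
    by (rule set_zero_plus2, rule set_plus_self_subset_sum4)
  then have "V + V \<subseteq> W" "V \<subseteq> B"
    using V(2) by auto
  moreover have "(A + cyclic_subgroup x) \<inter> (V + V + V + V) \<subseteq> {0}"
    using set_plus_cyclic_subgroup_inter_trivial[OF A zero_W x(2) D(2)] V(2) by blast
  ultimately show ?thesis
    using that x V(1) by blast
qed

definition (in abelian_topgroup) admissible :: "'a set \<times> 'a set \<Rightarrow> bool" where
  "admissible = (\<lambda>(W, A). symmetric_zero_nbhd W \<and> is_subgroup A \<and> A \<inter> (W + W + W + W) \<subseteq> {0})"

definition (in abelian_topgroup) extends :: "'a set \<Rightarrow> 'a set \<times> 'a set \<Rightarrow> 'a set \<times> 'a set \<Rightarrow> bool"
  where "extends B = (\<lambda>(W, A) (W', A'). \<exists>y. y \<noteq> 0 \<and> cyclic_subgroup y \<subseteq> W \<and>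
    A' = A + cyclic_subgroup y \<and> W' + W' \<subseteq> W \<and> W' \<subseteq> B)"

lemma (in abelian_topgroup) admissible_extension:
  assumes "\<not> NSS T"
    and "\<And>x. subtopology T (cyclic_subgroup x) = discrete_topology (cyclic_subgroup x)"
    and "admissible p" "openin T B" "0 \<in> B"
  shows "\<exists>q. admissible q \<and> extends B p q"
proof -
  obtain W A where p: "p = (W, A)" "symmetric_zero_nbhd W" "is_subgroup A"
    "A \<inter> (W + W + W + W) \<subseteq> {0}"
    using assms(3) unfolding admissible_def by (cases p) auto
  obtain y W' where y: "y \<noteq> 0" "cyclic_subgroup y \<subseteq> W" "W' + W' \<subseteq> W" "W' \<subseteq> B"
    and W': "symmetric_zero_nbhd W'" "(A + cyclic_subgroup y) \<inter> (W' + W' + W' + W') \<subseteq> {0}"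
    using independent_extension[OF assms(1,2) p(2,4) assms(4,5)] .
  have "is_subgroup (A + cyclic_subgroup y)"
    using is_subgroup_set_plus[OF p(3) is_subgroup_cyclic_subgroup] .
  then have "admissible (W', A + cyclic_subgroup y)"
    using W' unfolding admissible_def by simp
  moreover have "extends B p (W', A + cyclic_subgroup y)"
    using y unfolding extends_def p(1) prod.case by blast
  ultimately show ?thesis
    by blast
qed

lemma (in abelian_topgroup) admissible_chain_exists:
  assumes "\<not> NSS T"
    and "\<And>x. subtopology T (cyclic_subgroup x) = discrete_topology (cyclic_subgroup x)"
    and "\<And>n. openin T (B n)" "\<And>n. 0 \<in> B n"
  shows "\<exists>f. \<forall>n. admissible (f n) \<and> extends (B n) (f n) (f (Suc n))"
proof (rule dependent_nat_choice)
  have "admissible (UNIV, {0})"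
    using openin_topspace[of T] unfolding admissible_def symmetric_zero_nbhd_def is_subgroup_def
    by auto
  then show "\<exists>p. admissible p" ..
next
  fix p n
  assume "admissible p"
  then show "\<exists>q. admissible q \<and> extends (B n) p q"
    by (rule admissible_extension[OF assms(1,2) _ assms(3,4)])
qed

text \<open>The
  sums of four elements of \<open>W n\<close> in \<open>A_inter_W4\<close> are what \<open>limit_in_W_imp_vanishing\<close>
  needs: there the \<open>N\<close>-th partial sum is written as the limit minus the \<open>N\<close>-th term minus
  two pieces of the tail.\<close>

locale independent_sequence = abelian_topgroup T for T :: "'a::ab_group_add topology" +
  fixes x :: "nat \<Rightarrow> 'a" and W A :: "nat \<Rightarrow> 'a set"
  assumes torsion_free: "torsion_free TYPE('a)"
    and Hausdorff: "Hausdorff_space T"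
    and x_nonzero: "x n \<noteq> 0"
    and cyclic_subgroup_subset_W: "cyclic_subgroup (x n) \<subseteq> W n"
    and symmetric_zero_nbhd_W: "symmetric_zero_nbhd (W n)"
    and W_Suc_plus: "W (Suc n) + W (Suc n) \<subseteq> W n"
    and W_nbhd_base: "openin T U \<Longrightarrow> 0 \<in> U \<Longrightarrow> \<exists>n. W n \<subseteq> U"
    and is_subgroup_A: "is_subgroup (A n)"
    and A_Suc: "A (Suc n) = A n + cyclic_subgroup (x n)"
    and A_inter_W4: "A n \<inter> (W n + W n + W n + W n) \<subseteq> {0}"

lemma (in abelian_topgroup) independent_sequence_exists:
  assumes "torsion_free TYPE('a)" and "metrizable_space T" and "\<not> NSS T"
    and "\<And>x. subtopology T (cyclic_subgroup x) = discrete_topology (cyclic_subgroup x)"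
  shows "\<exists>x W A. independent_sequence T x W A"
proof -
  have "\<exists>B :: nat \<Rightarrow> 'a set. (\<forall>n. openin T (B n) \<and> 0 \<in> B n) \<and>
      (\<forall>U. openin T U \<and> 0 \<in> U \<longrightarrow> (\<exists>n. B n \<subseteq> U))"
    by (rule first_countable_nbhd_base_seq[OF metrizable_imp_first_countable[OF assms(2)]]) simp
  then obtain B :: "nat \<Rightarrow> 'a set" where B: "\<forall>n. openin T (B n) \<and> 0 \<in> B n"
    "\<forall>U. openin T U \<and> 0 \<in> U \<longrightarrow> (\<exists>n. B n \<subseteq> U)"
    by (elim exE conjE)
  have "\<exists>f. \<forall>n. admissible (f n) \<and> extends (B n) (f n) (f (Suc n))"
    using B(1) by (intro admissible_chain_exists[OF assms(3,4)]) auto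
  then obtain f where f: "\<And>n. admissible (f n)" "\<And>n. extends (B n) (f n) (f (Suc n))"
    by blast
  define W where "W n = fst (f n)" for n
  define A where "A n = snd (f n)" for n
  have "\<forall>n. \<exists>y. y \<noteq> 0 \<and> cyclic_subgroup y \<subseteq> W n \<and> A (Suc n) = A n + cyclic_subgroup y \<and>
      W (Suc n) + W (Suc n) \<subseteq> W n \<and> W (Suc n) \<subseteq> B n"
    using f(2) unfolding extends_def W_def A_def by (simp add: case_prod_beta)
  from choice[OF this] obtain x where x: "\<forall>n. x n \<noteq> 0 \<and> cyclic_subgroup (x n) \<subseteq> W n \<and>
      A (Suc n) = A n + cyclic_subgroup (x n) \<and> W (Suc n) + W (Suc n) \<subseteq> W n \<and> W (Suc n) \<subseteq> B n"
    ..
  note x = x[rule_format]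
  have adm: "symmetric_zero_nbhd (W n) \<and> is_subgroup (A n) \<and> A n \<inter> (W n + W n + W n + W n) \<subseteq> {0}"
    for n
    using f(1)[of n] unfolding admissible_def W_def A_def by (simp only: case_prod_beta)
  have W_base: "\<exists>n. W n \<subseteq> U" if "openin T U" "0 \<in> U" for U
  proof -
    have "\<exists>n. B n \<subseteq> U"
      using B(2) that by simp
    then obtain n where "B n \<subseteq> U"
      ..
    then have "W (Suc n) \<subseteq> U"
      using x[THEN conjunct2, THEN conjunct2, THEN conjunct2, THEN conjunct2] by (rule subset_trans[rotated])
    then show ?thesis
      ..
  qed
  have "independent_sequence T x W A"
    by (intro independent_sequence.intro independent_sequence_axioms.intro abelian_topgroup_axioms
        assms(1) metrizable_imp_Hausdorff_space[OF assms(2)] W_base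
        adm[THEN conjunct1] adm[THEN conjunct2, THEN conjunct1] adm[THEN conjunct2, THEN conjunct2]
        x[THEN conjunct1] x[THEN conjunct2, THEN conjunct1] x[THEN conjunct2, THEN conjunct2, THEN conjunct1]
        x[THEN conjunct2, THEN conjunct2, THEN conjunct2, THEN conjunct1])
  then show ?thesis
    by (intro exI[of _ x] exI[of _ W] exI[of _ A])
qed

context independent_sequence
begin

lemma openin_W: "openin T (W n)"
  and zero_in_W: "0 \<in> W n"
  and uminus_in_W: "v \<in> W n \<Longrightarrow> - v \<in> W n"
  using symmetric_zero_nbhd_W[of n] by (simp_all add: symmetric_zero_nbhd_def)

lemma add_in_W: "u \<in> W (Suc n) \<Longrightarrow> v \<in> W (Suc n) \<Longrightarrow> u + v \<in> W n"
  using W_Suc_plus[of n] set_plus_intro[of u "W (Suc n)" v "W (Suc n)"] by (rule subsetD)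

lemma A_inter_W4_eq_0: "a \<in> A n \<Longrightarrow> a \<in> W n + W n + W n + W n \<Longrightarrow> a = 0"
  using subsetD[OF A_inter_W4, of a n] by simp

lemma A_inter_W:
  assumes "a \<in> A n" "a \<in> W n"
  shows "a = 0"
proof -
  have "a + 0 + 0 + 0 \<in> W n + W n + W n + W n"
    using assms(2) zero_in_W by (intro set_plus_intro)
  then show ?thesis
    using A_inter_W4_eq_0[OF assms(1)] by simp
qed

lemma int_mult_in_W: "int_mult k (x n) \<in> W n"
  using cyclic_subgroup_subset_W int_mult_in_cyclic_subgroup by (rule subsetD)

lemma int_mult_independent:
  assumes "a \<in> A n" "a + int_mult k (x n) = 0"
  shows "k = 0"
proof -
  have "a = int_mult (- k) (x n)"
    using assms(2) by (simp add: int_mult_minus eq_neg_iff_add_eq_0)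
  then have "a = 0"
    using A_inter_W[OF assms(1)] int_mult_in_W by simp
  then show ?thesis
    using assms(2) x_nonzero int_mult_eq_0_iff[OF torsion_free] by simp
qed

definition partial_sum :: "nat \<Rightarrow> (nat \<Rightarrow> int) \<Rightarrow> 'a" where
  "partial_sum m c = (\<Sum>i<m. int_mult (c i) (x i))"

lemma partial_sum_0 [simp]: "partial_sum 0 c = 0"
  by (simp add: partial_sum_def)

lemma partial_sum_Suc: "partial_sum (Suc m) c = partial_sum m c + int_mult (c m) (x m)"
  by (simp add: partial_sum_def)

lemma partial_sum_add: "partial_sum m (c + d) = partial_sum m c + partial_sum m d"
  by (simp add: partial_sum_def int_mult_add sum.distrib)

lemma partial_sum_vanishing: "(\<And>i. i < m \<Longrightarrow> c i = 0) \<Longrightarrow> partial_sum m c = 0"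
  by (simp add: partial_sum_def)

lemma partial_sum_in_A: "partial_sum n c \<in> A n"
proof (induction n)
  case 0
  show ?case
    using is_subgroup_A by (simp add: is_subgroup_def)
next
  case (Suc n)
  then show ?case
    unfolding partial_sum_Suc A_Suc by (intro set_plus_intro int_mult_in_cyclic_subgroup)
qed

lemma partial_sum_eq_0_imp_vanishing: "partial_sum n c = 0 \<Longrightarrow> i < n \<Longrightarrow> c i = 0"
proof (induction n)
  case (Suc n)
  then have "c n = 0"
    using int_mult_independent[OF partial_sum_in_A] by (simp add: partial_sum_Suc)
  then show ?case
    using Suc by (auto simp: partial_sum_Suc less_Suc_eq)
qed simp

lemma partial_sum_tail_in_W: "Suc k \<le> m \<Longrightarrow> partial_sum m c - partial_sum (Suc k) c \<in> W k"
proof (induction "m - Suc k" arbitrary: k)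
  case 0
  then show ?case
    using zero_in_W by simp
next
  case (Suc d)
  have split: "partial_sum m c - partial_sum (Suc k) c =
      int_mult (c (Suc k)) (x (Suc k)) + (partial_sum m c - partial_sum (Suc (Suc k)) c)"
    by (simp add: partial_sum_Suc algebra_simps)
  have "partial_sum m c - partial_sum (Suc (Suc k)) c \<in> W (Suc k)"
    using Suc by simp
  then show ?case
    unfolding split by (rule add_in_W[OF int_mult_in_W])
qed

lemma limit_minus_partial_sum:
  assumes "limitin T (\<lambda>m. partial_sum m c) y sequentially"
  obtains u v where "u \<in> W k" "v \<in> W k" "y - partial_sum (Suc k) c = u + v"
proof -
  have "limitin T (\<lambda>m. y - partial_sum m c) (y - y) sequentially"
    by (rule limitin_diff[OF _ assms]) simp
  then have "\<exists>N. \<forall>m\<ge>N. y - partial_sum m c \<in> W k"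
    using openin_W zero_in_W unfolding limitin_sequentially by simp
  then obtain N where N: "\<And>m. N \<le> m \<Longrightarrow> y - partial_sum m c \<in> W k"
    by blast
  define m where "m = max N (Suc k)"
  have "y - partial_sum (Suc k) c = (y - partial_sum m c) + (partial_sum m c - partial_sum (Suc k) c)"
    by simp
  moreover have "y - partial_sum m c \<in> W k" "partial_sum m c - partial_sum (Suc k) c \<in> W k"
    using N partial_sum_tail_in_W by (simp_all add: m_def)
  ultimately show ?thesis
    using that by blast
qed

lemma limit_in_W_imp_vanishing:
  assumes "limitin T (\<lambda>m. partial_sum m c) y sequentially" "y \<in> W N" "i < N"
  shows "c i = 0"
proof -
  obtain u v where uv: "u \<in> W N" "v \<in> W N" "y - partial_sum (Suc N) c = u + v"
    using limit_minus_partial_sum[OF assms(1)] .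
  have "partial_sum N c = y + - int_mult (c N) (x N) + - u + - v"
    using uv(3) by (simp add: partial_sum_Suc algebra_simps)
  also have "\<dots> \<in> W N + W N + W N + W N"
    using assms(2) uv int_mult_in_W by (intro set_plus_intro uminus_in_W)
  finally have "partial_sum N c = 0"
    using A_inter_W4_eq_0 partial_sum_in_A by blast
  then show ?thesis
    using assms(3) by (rule partial_sum_eq_0_imp_vanishing)
qed

lemma limit_in_W_if_vanishing:
  assumes "limitin T (\<lambda>m. partial_sum m c) y sequentially" "\<And>i. i < Suc (Suc k) \<Longrightarrow> c i = 0"
  shows "y \<in> W k"
proof -
  obtain u v where "u \<in> W (Suc k)" "v \<in> W (Suc k)" "y - partial_sum (Suc (Suc k)) c = u + v"
    using limit_minus_partial_sum[OF assms(1)] .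
  moreover have "partial_sum (Suc (Suc k)) c = 0"
    using assms(2) by (rule partial_sum_vanishing)
  ultimately show ?thesis
    using add_in_W by simp
qed

lemma partial_sum_Cauchy:
  assumes "openin T U" "0 \<in> U"
  shows "\<exists>N. \<forall>m\<ge>N. \<forall>n\<ge>N. partial_sum m c - partial_sum n c \<in> U"
proof -
  obtain k where k: "W k \<subseteq> U"
    using W_nbhd_base[OF assms] by blast
  have "partial_sum m c - partial_sum n c \<in> U" if "Suc (Suc k) \<le> m" "Suc (Suc k) \<le> n" for m n
  proof -
    have "partial_sum m c - partial_sum (Suc (Suc k)) c \<in> W (Suc k)"
      "- (partial_sum n c - partial_sum (Suc (Suc k)) c) \<in> W (Suc k)"
      using partial_sum_tail_in_W that uminus_in_W by blast+
    then have "(partial_sum m c - partial_sum (Suc (Suc k)) c) + - (partial_sum n c - partial_sum (Suc (Suc k)) c) \<in> W k"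
      by (rule add_in_W)
    then show ?thesis
      using k by auto
  qed
  then show ?thesis
    by blast
qed

lemma partial_sum_converges_if_finite:
  assumes "finite {n. c n \<noteq> 0}"
  shows "\<exists>y. limitin T (\<lambda>m. partial_sum m c) y sequentially"
proof -
  obtain M where M: "{n. c n \<noteq> 0} \<subseteq> {..<M}"
    using finite_nat_bounded[OF assms] by blast
  have eventually_const: "partial_sum m c = partial_sum M c" if "M \<le> m" for m
    using that
  proof (induction m rule: dec_induct)
    case (step m)
    then have "c m = 0"
      using M by auto
    then show ?case
      using step by (simp add: partial_sum_Suc)
  qed simp
  have "limitin T (\<lambda>m. partial_sum m c) (partial_sum M c) sequentially"
    by (rule limitin_eventually) (simp, unfold eventually_sequentially, use eventually_const in blast)
  then show ?thesis
    ..
qed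

definition series_sum :: "(nat \<Rightarrow> int) \<Rightarrow> 'a" where
  "series_sum c = (SOME y. limitin T (\<lambda>m. partial_sum m c) y sequentially)"

lemma series_sum_eqI: "limitin T (\<lambda>m. partial_sum m c) y sequentially \<Longrightarrow> series_sum c = y"
  unfolding series_sum_def
  by (rule some_equality) (auto intro: limitin_Hausdorff_unique[OF _ _ sequentially_bot Hausdorff])

context
  fixes S :: "(nat \<Rightarrow> int) set"
  assumes is_subgroup_S: "is_subgroup S"
    and convergent: "\<And>c. c \<in> S \<Longrightarrow> \<exists>y. limitin T (\<lambda>m. partial_sum m c) y sequentially"
begin

lemma limitin_series_sum: "c \<in> S \<Longrightarrow> limitin T (\<lambda>m. partial_sum m c) (series_sum c) sequentially"
  using convergent series_sum_eqI by blast

lemma additive_on_series_sum: "additive_on S series_sum"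
  unfolding additive_on_def
proof (intro ballI)
  fix c d assume "c \<in> S" "d \<in> S"
  then have "limitin T (\<lambda>m. partial_sum m c + partial_sum m d) (series_sum c + series_sum d) sequentially"
    by (intro limitin_add limitin_series_sum)
  then show "series_sum (c + d) = series_sum c + series_sum d"
    by (intro series_sum_eqI) (simp add: partial_sum_add)
qed

lemma series_sum_in_W_imp_vanishing: "c \<in> S \<Longrightarrow> series_sum c \<in> W N \<Longrightarrow> i < N \<Longrightarrow> c i = 0"
  using limit_in_W_imp_vanishing limitin_series_sum by blast

lemma series_sum_in_W_if_vanishing:
  "c \<in> S \<Longrightarrow> (\<And>i. i < Suc (Suc k) \<Longrightarrow> c i = 0) \<Longrightarrow> series_sum c \<in> W k"
  using limit_in_W_if_vanishing limitin_series_sum by blast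

lemma series_sum_diff: "c \<in> S \<Longrightarrow> d \<in> S \<Longrightarrow> series_sum (d - c) = series_sum d - series_sum c"
  by (rule additive_on_diff[OF is_subgroup_S additive_on_series_sum])

lemma inj_on_series_sum: "inj_on series_sum S"
proof (rule inj_onI)
  fix c d assume cd: "c \<in> S" "d \<in> S" "series_sum c = series_sum d"
  then have "series_sum (d - c) = 0"
    using series_sum_diff by simp
  then have "(d - c) i = 0" for i
    using series_sum_in_W_imp_vanishing[of "d - c" "Suc i" i] is_subgroup_diff[OF is_subgroup_S cd(2,1)]
      zero_in_W by simp
  then show "c = d"
    by (simp add: fun_eq_iff)
qed

lemma series_sum_diff_in_W_imp_cylinder:
  assumes "c \<in> S" "d \<in> S" "series_sum d - series_sum c \<in> W N"
  shows "d \<in> cylinder c N"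
proof -
  have "series_sum (d - c) \<in> W N"
    using assms series_sum_diff by simp
  then have "(d - c) i = 0" if "i < N" for i
    using series_sum_in_W_imp_vanishing is_subgroup_diff[OF is_subgroup_S assms(2,1)] that by blast
  then show ?thesis
    by (simp add: cylinder_def)
qed

lemma series_sum_diff_in_W_if_cylinder:
  assumes "c \<in> S" "d \<in> cylinder c (Suc (Suc k)) \<inter> S"
  shows "series_sum d - series_sum c \<in> W k"
proof -
  have "series_sum (d - c) \<in> W k"
    using assms is_subgroup_diff[OF is_subgroup_S _ assms(1)]
    by (intro series_sum_in_W_if_vanishing) (auto simp: cylinder_def)
  then show ?thesis
    using series_sum_diff[OF assms(1)] assms(2) by simp
qed

lemma continuous_map_series_sum: "continuous_map (subtopology ZN_top S) T series_sum"
  unfolding continuous_map_def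
proof (intro conjI allI impI)
  fix V assume V: "openin T V"
  show "openin (subtopology ZN_top S) {c \<in> topspace (subtopology ZN_top S). series_sum c \<in> V}"
    unfolding openin_subtopology_ZN_top_iff
  proof (intro conjI ballI)
    fix c assume "c \<in> {c \<in> topspace (subtopology ZN_top S). series_sum c \<in> V}"
    then have c: "c \<in> S" "series_sum c \<in> V"
      by auto
    have "openin T {z. series_sum c + z \<in> V}" "0 \<in> {z. series_sum c + z \<in> V}"
      using openin_translation_preimage[OF V] c(2) by simp_all
    then obtain k where k: "W k \<subseteq> {z. series_sum c + z \<in> V}"
      using W_nbhd_base by blast
    have "cylinder c (Suc (Suc k)) \<inter> S \<subseteq> {c \<in> topspace (subtopology ZN_top S). series_sum c \<in> V}"
    proof
      fix d assume d: "d \<in> cylinder c (Suc (Suc k)) \<inter> S"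
      then have "series_sum c + (series_sum d - series_sum c) \<in> V"
        using subsetD[OF k series_sum_diff_in_W_if_cylinder[OF c(1)]] by simp
      then show "d \<in> {c \<in> topspace (subtopology ZN_top S). series_sum c \<in> V}"
        using d by simp
    qed
    then show "\<exists>N. cylinder c N \<inter> S \<subseteq> {c \<in> topspace (subtopology ZN_top S). series_sum c \<in> V}"
      ..
  qed auto
qed auto

lemma open_map_series_sum: "open_map (subtopology ZN_top S) (subtopology T (series_sum ` S)) series_sum"
  unfolding open_map_def
proof (intro allI impI)
  fix U assume "openin (subtopology ZN_top S) U"
  then have U: "U \<subseteq> S" "\<And>c. c \<in> U \<Longrightarrow> \<exists>N. cylinder c N \<inter> S \<subseteq> U"
    unfolding openin_subtopology_ZN_top_iff by auto
  show "openin (subtopology T (series_sum ` S)) (series_sum ` U)"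
  proof (subst openin_subopen, intro ballI)
    fix y assume "y \<in> series_sum ` U"
    then obtain c where c: "c \<in> U" "y = series_sum c"
      by blast
    obtain N where N: "cylinder c N \<inter> S \<subseteq> U"
      using U(2)[OF c(1)] ..
    define V where "V = {z. - series_sum c + z \<in> W N}"
    have "openin T V"
      unfolding V_def by (rule openin_translation_preimage[OF openin_W])
    then have "openin (subtopology T (series_sum ` S)) (V \<inter> series_sum ` S)"
      by (rule openin_subtopology_Int)
    moreover have "y \<in> V \<inter> series_sum ` S"
      using c U(1) zero_in_W by (auto simp: V_def)
    moreover have "V \<inter> series_sum ` S \<subseteq> series_sum ` U"
    proof
      fix z assume "z \<in> V \<inter> series_sum ` S"
      then obtain d where d: "d \<in> S" "z = series_sum d" "series_sum d - series_sum c \<in> W N"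
        by (auto simp: V_def)
      then have "d \<in> cylinder c N"
        using series_sum_diff_in_W_imp_cylinder c(1) U(1) by blast
      then show "z \<in> series_sum ` U"
        using N d(1,2) by blast
    qed
    ultimately show "\<exists>V'. openin (subtopology T (series_sum ` S)) V' \<and> y \<in> V' \<and> V' \<subseteq> series_sum ` U"
      by blast
  qed
qed

lemma contains_top_iso_of_convergent: "contains_top_iso T S"
proof (rule contains_top_isoI[OF is_subgroup_S inj_on_series_sum additive_on_series_sum])
  show "homeomorphic_map (subtopology ZN_top S) (subtopology T (series_sum ` S)) series_sum"
  proof (rule bijective_open_imp_homeomorphic_map)
    show "continuous_map (subtopology ZN_top S) (subtopology T (series_sum ` S)) series_sum"
      using continuous_map_series_sum by (auto simp: continuous_map_in_subtopology)
  qed (use open_map_series_sum inj_on_series_sum in auto)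
qed

end

lemma contains_top_iso_ZN_fin: "contains_top_iso T ZN_fin"
  using is_subgroup_ZN_fin partial_sum_converges_if_finite
  by (rule contains_top_iso_of_convergent) (simp add: ZN_fin_def)

lemma contains_top_iso_UNIV:
  assumes "group_complete T"
  shows "contains_top_iso T UNIV"
proof (rule contains_top_iso_of_convergent)
  show "is_subgroup (UNIV :: (nat \<Rightarrow> int) set)"
    by (simp add: is_subgroup_def)
  show "\<exists>y. limitin T (\<lambda>m. partial_sum m c) y sequentially" for c
  proof -
    have "\<forall>U. openin T U \<and> 0 \<in> U \<longrightarrow> (\<exists>N. \<forall>m\<ge>N. \<forall>n\<ge>N. partial_sum m c - partial_sum n c \<in> U)"
      using partial_sum_Cauchy by blast
    then show ?thesis
      using spec[OF assms[unfolded group_complete_def], of "\<lambda>m. partial_sum m c"] by blast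
  qed
qed

end

theorem corollary8p3:
  fixes T :: "('a::ab_group_add) topology"
  assumes "ab_topgroup T"
    and "torsion_free TYPE('a)"
    and "metrizable_space T"
    and "\<forall>x. subtopology T (cyclic_subgroup x) = discrete_topology (cyclic_subgroup x)"
  shows "(\<not> NSS T \<longleftrightarrow> contains_top_iso T ZN_fin) \<and>
         (group_complete T \<longrightarrow> (\<not> NSS T \<longleftrightarrow> contains_top_iso T UNIV))"
proof -
  interpret abelian_topgroup T
    using assms(1) by unfold_locales
  have sequence: "\<exists>x W A. independent_sequence T x W A" if "\<not> NSS T"
    using independent_sequence_exists assms(2,3,4) that by blast
  have "\<not> NSS T \<longleftrightarrow> contains_top_iso T ZN_fin"
    using sequence independent_sequence.contains_top_iso_ZN_fin
      contains_top_iso_imp_not_NSS[OF is_subgroup_ZN_fin unit_vector_in_ZN_fin] by blast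
  moreover have "\<not> NSS T \<longleftrightarrow> contains_top_iso T UNIV" if "group_complete T"
    using sequence independent_sequence.contains_top_iso_UNIV[OF _ that]
      contains_top_iso_imp_not_NSS[of UNIV] by (auto simp: is_subgroup_def)
  ultimately show ?thesis
    by blast
qed

end
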